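(* Let $G$ be a finite simple connected graph and let $S,S'\subseteq V(G)$ with $2\le |S|$ and $S\subset S'$. If $G$ contains $k$ completely independent $S'$-Steiner trees, then $G$ contains $k$ completely independent $S$-Steiner trees. In particular $\kappa^*_G(S)\geq \kappa^*_G(S')$.
   Context: For $S\subseteq V(G)$ with $|S|\ge 2$, an $S$-Steiner tree of $G$ is a subtree $T$ of $G$ with $S\subseteq V(T)$ all of whose leaves belong to $S$. A family of $S$-Steiner trees $T_1,\dots,T_k$ is completely independent if for all $1\le p<q\le k$: $E(T_p)\cap E(T_q)=\emptyset$, $V(T_p)\cap V(T_q)=S$, and for any two vertices $x_1,x_2\in S$ the $(x_1,x_2)$-paths in $T_p$ and in $T_q$ are internally disjoint. $\kappa^*_G(S)$ is the maximum number of $S$-Steiner trees in a completely independent family in $G$. *)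

theory Defs
  imports Main
begin

definition simple_graph :: "'a set \<Rightarrow> 'a set set \<Rightarrow> bool" where
  "simple_graph V E \<longleftrightarrow> (\<forall>e\<in>E. \<exists>u v. e = {u, v} \<and> u \<noteq> v \<and> u \<in> V \<and> v \<in> V)"

definition finite_simple_graph :: "'a set \<Rightarrow> 'a set set \<Rightarrow> bool" where
  "finite_simple_graph V E \<longleftrightarrow> finite V \<and> simple_graph V E"

definition is_path :: "'a set \<Rightarrow> 'a set set \<Rightarrow> 'a list \<Rightarrow> bool" where
  "is_path V E P \<longleftrightarrow> P \<noteq> [] \<and> distinct P \<and> set P \<subseteq> V \<and>
     (\<forall>i. Suc i < length P \<longrightarrow> {P ! i, P ! Suc i} \<in> E)"

definition path_between :: "'a set \<Rightarrow> 'a set set \<Rightarrow> 'a \<Rightarrow> 'a \<Rightarrow> 'a list \<Rightarrow> bool" where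
  "path_between V E x y P \<longleftrightarrow> is_path V E P \<and> hd P = x \<and> last P = y"

definition connected_graph :: "'a set \<Rightarrow> 'a set set \<Rightarrow> bool" where
  "connected_graph V E \<longleftrightarrow> V \<noteq> {} \<and> (\<forall>x\<in>V. \<forall>y\<in>V. \<exists>P. path_between V E x y P)"

definition is_cycle :: "'a set \<Rightarrow> 'a set set \<Rightarrow> 'a list \<Rightarrow> bool" where
  "is_cycle V E C \<longleftrightarrow> is_path V E C \<and> length C \<ge> 3 \<and> {last C, hd C} \<in> E"

definition is_tree :: "'a set \<Rightarrow> 'a set set \<Rightarrow> bool" where
  "is_tree V E \<longleftrightarrow> simple_graph V E \<and> connected_graph V E \<and> (\<nexists>C. is_cycle V E C)"

definition subgraph :: "'a set \<Rightarrow> 'a set set \<Rightarrow> 'a set \<Rightarrow> 'a set set \<Rightarrow> bool" where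
  "subgraph VT ET V E \<longleftrightarrow> VT \<subseteq> V \<and> ET \<subseteq> E \<and> (\<forall>e\<in>ET. e \<subseteq> VT)"

definition degree :: "'a set set \<Rightarrow> 'a \<Rightarrow> nat" where
  "degree E v = card {e\<in>E. v \<in> e}"

definition leaves :: "'a set \<Rightarrow> 'a set set \<Rightarrow> 'a set" where
  "leaves V E = {v\<in>V. degree E v = 1}"

definition steiner_tree :: "'a set \<Rightarrow> 'a set set \<Rightarrow> 'a set \<Rightarrow> 'a set \<times> 'a set set \<Rightarrow> bool" where
  "steiner_tree V E S T \<longleftrightarrow> subgraph (fst T) (snd T) V E \<and> is_tree (fst T) (snd T) \<and>
     S \<subseteq> fst T \<and> leaves (fst T) (snd T) \<subseteq> S"

definition internal :: "'a list \<Rightarrow> 'a set" where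
  "internal P = set (butlast (tl P))"

definition completely_independent ::
  "'a set \<Rightarrow> 'a set set \<Rightarrow> 'a set \<Rightarrow> nat \<Rightarrow> (nat \<Rightarrow> 'a set \<times> 'a set set) \<Rightarrow> bool" where
  "completely_independent V E S k T \<longleftrightarrow>
     (\<forall>i<k. steiner_tree V E S (T i)) \<and>
     (\<forall>p q. p < q \<and> q < k \<longrightarrow>
        snd (T p) \<inter> snd (T q) = {} \<and>
        fst (T p) \<inter> fst (T q) = S \<and>
        (\<forall>x1\<in>S. \<forall>x2\<in>S. \<forall>P Q.
            path_between (fst (T p)) (snd (T p)) x1 x2 P \<and>
            path_between (fst (T q)) (snd (T q)) x1 x2 Q \<longrightarrow>
            internal P \<inter> internal Q = {}))"

definition has_cist :: "'a set \<Rightarrow> 'a set set \<Rightarrow> 'a set \<Rightarrow> nat \<Rightarrow> bool" where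
  "has_cist V E S k \<longleftrightarrow> (\<exists>T. completely_independent V E S k T)"

definition kappa_star :: "'a set \<Rightarrow> 'a set set \<Rightarrow> 'a set \<Rightarrow> nat" where
  "kappa_star V E S = Max {k. has_cist V E S k}"

end

theory Submission
  imports Defs
begin

text \<open>Replace every tree \<open>T\<^sub>i\<close> of a completely independent family of \<open>S'\<close>-Steiner trees by
  its S-span, the union of the \<open>T\<^sub>i\<close>-paths between vertices of \<open>S\<close>. This is a tree whose
  leaves lie in \<open>S\<close>; its paths are paths of \<open>T\<^sub>i\<close>, so edge-disjointness and the internal
  disjointness of paths are inherited. It remains to see that two spans meet only in \<open>S\<close>.
  If \<open>v \<notin> S\<close> lay in the spans of \<open>T\<^sub>p\<close> and \<open>T\<^sub>q\<close>, then in each tree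
  "\<open>v\<close> is not on the \<open>x\<close>-\<open>y\<close> path" is an equivalence relation on \<open>S\<close>, and internal
  disjointness makes every pair of \<open>S\<close> related in one of the two trees. Hence one of the two
  relations is total, contradicting that \<open>v\<close> lies on a path between vertices of \<open>S\<close> in
  each tree. Since the trees of a family are edge-disjoint and nonempty, their number is at
  most \<open>|E|\<close>, so \<open>\<kappa>\<^sup>*\<close> is a genuine maximum and monotonicity follows.\<close>

fun path_edges :: "'a list \<Rightarrow> 'a set set" where
  "path_edges (x # y # xs) = insert {x, y} (path_edges (y # xs))"
| "path_edges _ = {}"

lemma consecutive_edges_iff_path_edges:
  "(\<forall>i. Suc i < length P \<longrightarrow> {P ! i, P ! Suc i} \<in> E) \<longleftrightarrow> path_edges P \<subseteq> E"
proof (induction P rule: path_edges.induct)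
  case (1 x y xs)
  have "(\<forall>i. Suc i < length (x # y # xs) \<longrightarrow> {(x # y # xs) ! i, (x # y # xs) ! Suc i} \<in> E)
     \<longleftrightarrow> {x, y} \<in> E \<and> (\<forall>i. Suc i < length (y # xs) \<longrightarrow> {(y # xs) ! i, (y # xs) ! Suc i} \<in> E)"
    by (auto simp: less_Suc_eq_0_disj simp del: nth_Cons)
  with "1.IH" show ?case by simp
qed auto

lemma path_edges_Cons: "xs \<noteq> [] \<Longrightarrow> path_edges (x # xs) = insert {x, hd xs} (path_edges xs)"
  by (cases xs) auto

lemma path_edges_append: "path_edges (xs @ y # ys) = path_edges (xs @ [y]) \<union> path_edges (y # ys)"
proof (induction xs)
  case (Cons a xs)
  then show ?case by (cases xs) auto
qed auto

lemma path_edges_join: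
  assumes "xs \<noteq> []" "ys \<noteq> []" "last xs = hd ys"
  shows "path_edges (xs @ tl ys) = path_edges xs \<union> path_edges ys"
proof -
  have "xs @ tl ys = butlast xs @ last xs # tl ys" using assms(1) by simp
  moreover have "butlast xs @ [last xs] = xs" using assms(1) by simp
  moreover have "last xs # tl ys = ys" using assms(2,3) by simp
  ultimately show ?thesis by (metis path_edges_append)
qed

lemma path_edges_rev: "path_edges (rev xs) = path_edges xs"
proof (induction xs rule: path_edges.induct)
  case (1 x y xs)
  have "path_edges (rev (x # y # xs)) = path_edges (rev (y # xs)) \<union> path_edges [y, x]"
    using path_edges_append[of "rev xs" y "[x]"] by simp
  with "1.IH" show ?case by (auto simp: insert_commute)
qed auto

lemma path_edges_subset_set: "e \<in> path_edges xs \<Longrightarrow> e \<subseteq> set xs"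
  by (induction xs rule: path_edges.induct) auto

lemma path_edges_infix: "path_edges ys \<subseteq> path_edges (xs @ ys @ zs)"
proof -
  have "path_edges ys \<subseteq> path_edges (ys @ zs)"
    by (induction ys rule: path_edges.induct) auto
  moreover have "path_edges ws \<subseteq> path_edges (xs @ ws)" for ws
    using path_edges_append[of xs "hd ws" "tl ws"] by (cases ws) auto
  ultimately show ?thesis by blast
qed

lemma walk_to_path:
  assumes "xs \<noteq> []"
  shows "\<exists>ys. ys \<noteq> [] \<and> distinct ys \<and> hd ys = hd xs \<and> last ys = last xs \<and>
    set ys \<subseteq> set xs \<and> path_edges ys \<subseteq> path_edges xs"
  using assms
proof (induction xs)
  case (Cons x xs)
  show ?case
  proof (cases "xs = []")
    case True
    then show ?thesis by (intro exI[of _ "[x]"]) simp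
  next
    case xs_nonempty: False
    then obtain ys where ys: "ys \<noteq> []" "distinct ys" "hd ys = hd xs" "last ys = last xs"
      "set ys \<subseteq> set xs" "path_edges ys \<subseteq> path_edges xs"
      using Cons.IH by blast
    have edges: "path_edges (x # xs) = insert {x, hd xs} (path_edges xs)"
      using xs_nonempty by (rule path_edges_Cons)
    show ?thesis
    proof (cases "x \<in> set ys")
      case True
      \<comment> \<open>the walk returns to \<open>x\<close>: cut off the loop\<close>
      then obtain us vs where ys_split: "ys = us @ x # vs" by (meson split_list)
      have "path_edges (x # vs) \<subseteq> path_edges (x # xs)"
        using ys(6) path_edges_append[of us x vs] unfolding ys_split edges by blast
      moreover have "distinct (x # vs)" using ys(2) ys_split by simp
      moreover have "last (x # vs) = last (x # xs)" using ys(4) ys_split xs_nonempty by simp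
      moreover have "set (x # vs) \<subseteq> set (x # xs)" using ys(5) ys_split by auto
      ultimately show ?thesis by (intro exI[of _ "x # vs"]) simp
    next
      case False
      have "path_edges (x # ys) \<subseteq> path_edges (x # xs)"
        using ys(1,3,6) edges by (auto simp: path_edges_Cons)
      with False ys xs_nonempty show ?thesis by (intro exI[of _ "x # ys"]) auto
    qed
  qed
qed simp

lemma is_path_iff: "is_path V E P \<longleftrightarrow> P \<noteq> [] \<and> distinct P \<and> set P \<subseteq> V \<and> path_edges P \<subseteq> E"
  unfolding is_path_def consecutive_edges_iff_path_edges by (rule refl)

lemma path_between_iff:
  "path_between V E x y P \<longleftrightarrow>
     P \<noteq> [] \<and> distinct P \<and> set P \<subseteq> V \<and> path_edges P \<subseteq> E \<and> hd P = x \<and> last P = y"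
  unfolding path_between_def is_path_iff by blast

lemma path_edges_nonempty: "path_between V E x y P \<Longrightarrow> x \<noteq> y \<Longrightarrow> path_edges P \<noteq> {}"
  unfolding path_between_iff by (cases P rule: path_edges.cases) auto

lemma path_between_rev: "path_between V E x y P \<Longrightarrow> path_between V E y x (rev P)"
  unfolding path_between_iff by (auto simp: path_edges_rev hd_rev last_rev)

lemma path_between_mono:
  "path_between V E x y P \<Longrightarrow> V \<subseteq> V' \<Longrightarrow> E \<subseteq> E' \<Longrightarrow> path_between V' E' x y P"
  unfolding path_between_iff by auto

lemma is_cycle_mono: "is_cycle V E C \<Longrightarrow> V \<subseteq> V' \<Longrightarrow> E \<subseteq> E' \<Longrightarrow> is_cycle V' E' C"
  unfolding is_cycle_def is_path_iff by auto

definition reachable :: "'a set \<Rightarrow> 'a set set \<Rightarrow> 'a \<Rightarrow> 'a \<Rightarrow> bool" where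
  "reachable V E x y \<longleftrightarrow>
     (\<exists>W. W \<noteq> [] \<and> hd W = x \<and> last W = y \<and> set W \<subseteq> V \<and> path_edges W \<subseteq> E)"

lemma path_between_imp_reachable: "path_between V E x y P \<Longrightarrow> reachable V E x y"
  unfolding reachable_def path_between_iff by blast

lemma reachable_sym: "reachable V E x y \<Longrightarrow> reachable V E y x"
  unfolding reachable_def by (metis hd_rev last_rev path_edges_rev rev_is_Nil_conv set_rev)

lemma reachable_trans:
  assumes "reachable V E x y" "reachable V E y z"
  shows "reachable V E x z"
proof -
  obtain W1 W2 where W: "W1 \<noteq> []" "hd W1 = x" "last W1 = y" "set W1 \<subseteq> V" "path_edges W1 \<subseteq> E"
    "W2 \<noteq> []" "hd W2 = y" "last W2 = z" "set W2 \<subseteq> V" "path_edges W2 \<subseteq> E"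
    using assms unfolding reachable_def by blast
  then have "path_edges (W1 @ tl W2) \<subseteq> E" by (simp add: path_edges_join)
  moreover have "set (W1 @ tl W2) \<subseteq> V" using W by (cases W2) auto
  moreover have "last (W1 @ tl W2) = z" using W by (cases W2) auto
  moreover have "W1 @ tl W2 \<noteq> []" "hd (W1 @ tl W2) = x" using W by simp_all
  ultimately show ?thesis unfolding reachable_def by blast
qed

lemma reachable_imp_path:
  assumes "reachable V E x y"
  obtains P where "path_between V E x y P"
proof -
  obtain W where W: "W \<noteq> []" "hd W = x" "last W = y" "set W \<subseteq> V" "path_edges W \<subseteq> E"
    using assms unfolding reachable_def by blast
  obtain P where "P \<noteq> []" "distinct P" "hd P = hd W" "last P = last W"
    "set P \<subseteq> set W" "path_edges P \<subseteq> path_edges W"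
    using walk_to_path[OF W(1)] by blast
  with W have "path_between V E x y P" unfolding path_between_iff by auto
  then show ?thesis by (rule that)
qed

lemma path_between_Cons:
  "P \<noteq> [] \<Longrightarrow> path_between V E x y (x # P) \<longleftrightarrow>
     x \<in> V \<and> x \<notin> set P \<and> {x, hd P} \<in> E \<and> path_between V E (hd P) y P"
  unfolding path_between_iff by (auto simp: path_edges_Cons)

lemma path_between_self: "path_between V E x x P \<Longrightarrow> P = [x]"
  unfolding path_between_iff by (cases P) (auto split: if_splits dest: last_in_set)

lemma cycle_through_fork:
  assumes R: "path_between V E a b R" and "a \<noteq> b" "x \<in> V" "x \<notin> set R"
    and "{x, a} \<in> E" "{x, b} \<in> E"
  shows "is_cycle V E (x # R)"
proof -
  have "R \<noteq> []" "hd R = a" "last R = b" using R unfolding path_between_iff by auto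
  then have "length R \<ge> 2" using \<open>a \<noteq> b\<close> by (cases R; cases "tl R") auto
  moreover have "path_between V E x b (x # R)"
    using assms \<open>R \<noteq> []\<close> \<open>hd R = a\<close> by (simp add: path_between_Cons)
  ultimately show ?thesis
    using assms \<open>R \<noteq> []\<close> \<open>last R = b\<close> unfolding is_cycle_def path_between_def
    by (simp add: insert_commute)
qed

lemma acyclic_path_unique:
  assumes acyclic: "\<nexists>C. is_cycle V E C"
  shows "path_between V E x y P \<Longrightarrow> path_between V E x y Q \<Longrightarrow> P = Q"
proof (induction P arbitrary: x Q)
  case Nil
  then show ?case by (simp add: path_between_iff)
next
  case (Cons x' P')
  have "x' = x" using Cons.prems(1) by (simp add: path_between_iff)
  obtain Q' where Q: "Q = x # Q'"
    using Cons.prems(2) unfolding path_between_iff by (cases Q) auto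
  show ?case
  proof (cases "P' = [] \<or> Q' = []")
    case True
    then have "y = x" using Cons.prems Q \<open>x' = x\<close> by (auto simp: path_between_iff)
    then show ?thesis using Cons.prems by (metis path_between_self)
  next
    case False
    then have P'_path: "path_between V E (hd P') y P'" and Q'_path: "path_between V E (hd Q') y Q'"
      and x: "x \<in> V" "x \<notin> set P'" "x \<notin> set Q'" "{x, hd P'} \<in> E" "{x, hd Q'} \<in> E"
      using Cons.prems \<open>x' = x\<close> Q by (auto simp: path_between_Cons)
    show ?thesis
    proof (cases "hd P' = hd Q'")
      case True
      with Cons.IH P'_path Q'_path show ?thesis using Q \<open>x' = x\<close> by simp
    next
      case False
      \<comment> \<open>the two paths leave \<open>x\<close> through different neighbours and meet again,
        which closes a cycle through \<open>x\<close>\<close>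
      let ?U = "set P' \<union> set Q'"
      have "reachable ?U E (hd P') y" "reachable ?U E (hd Q') y"
        using P'_path Q'_path unfolding reachable_def path_between_iff by blast+
      then have "reachable ?U E (hd P') (hd Q')" by (metis reachable_sym reachable_trans)
      then obtain R where R: "path_between ?U E (hd P') (hd Q') R" by (rule reachable_imp_path)
      have "x \<notin> set R" using R x unfolding path_between_iff by auto
      moreover have "path_between V E (hd P') (hd Q') R"
        using P'_path Q'_path by (intro path_between_mono[OF R]) (auto simp: path_between_iff)
      ultimately have "is_cycle V E (x # R)" using False x by (blast intro: cycle_through_fork)
      with acyclic show ?thesis by blast
    qed
  qed
qed

lemma in_set_butlastI: "x \<in> set xs \<Longrightarrow> x \<noteq> last xs \<Longrightarrow> x \<in> set (butlast xs)"
  by (induction xs) auto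

lemma in_internalI:
  assumes "u \<in> set P" "u \<noteq> hd P" "u \<noteq> last P"
  shows "u \<in> internal P"
  using assms unfolding internal_def by (cases P) (auto intro: in_set_butlastI split: if_splits)

lemma internalE:
  assumes "u \<in> internal P"
  obtains xs v w zs where "P = xs @ v # u # w # zs"
proof -
  obtain a rest where P: "P = a # rest" and "u \<in> set (butlast rest)"
    using assms unfolding internal_def by (cases P) auto
  then obtain us vs where split: "butlast rest = us @ u # vs" by (meson split_list)
  then have "rest = us @ u # vs @ [last rest]"
    using append_butlast_last_id[of rest] by (cases "rest = []") auto
  moreover obtain xs v where "a # us = xs @ [v]" by (metis rev_exhaust list.discI)
  moreover obtain w zs where "vs @ [last rest] = w # zs" by (metis neq_Nil_conv snoc_eq_iff_butlast)
  ultimately have "P = xs @ v # u # w # zs" unfolding P by (metis append.assoc append_Cons append_Nil)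
  then show ?thesis by (rule that)
qed

lemma internal_vertex_two_path_edges:
  assumes "distinct P" "u \<in> internal P"
  obtains v w where "v \<noteq> w" "{v, u} \<in> path_edges P" "{u, w} \<in> path_edges P"
proof -
  obtain xs v w zs where P: "P = xs @ v # u # w # zs" using assms(2) by (rule internalE)
  have "path_edges [v, u, w] \<subseteq> path_edges P" unfolding P using path_edges_infix[of "[v, u, w]"] by simp
  moreover have "v \<noteq> w" using assms(1) unfolding P by auto
  ultimately show ?thesis using that by auto
qed

definition span_vertices :: "'a set \<Rightarrow> 'a set set \<Rightarrow> 'a set \<Rightarrow> 'a set" where
  "span_vertices VT ET S = {u. \<exists>a\<in>S. \<exists>b\<in>S. \<exists>P. path_between VT ET a b P \<and> u \<in> set P}"

definition span_edges :: "'a set \<Rightarrow> 'a set set \<Rightarrow> 'a set \<Rightarrow> 'a set set" where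
  "span_edges VT ET S = {e. \<exists>a\<in>S. \<exists>b\<in>S. \<exists>P. path_between VT ET a b P \<and> e \<in> path_edges P}"

lemma span_vertices_subset: "span_vertices VT ET S \<subseteq> VT"
  unfolding span_vertices_def path_between_iff by auto

lemma span_edges_subset: "span_edges VT ET S \<subseteq> ET"
  unfolding span_edges_def path_between_iff by auto

lemma span_edge_subset_span_vertices: "e \<in> span_edges VT ET S \<Longrightarrow> e \<subseteq> span_vertices VT ET S"
  unfolding span_edges_def span_vertices_def using path_edges_subset_set by blast

lemma subset_span_vertices: "S \<subseteq> VT \<Longrightarrow> S \<subseteq> span_vertices VT ET S"
  unfolding span_vertices_def by (force simp: path_between_iff)

lemma path_between_span:
  "a \<in> S \<Longrightarrow> b \<in> S \<Longrightarrow> path_between VT ET a b P \<Longrightarrow>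
     path_between (span_vertices VT ET S) (span_edges VT ET S) a b P"
  unfolding path_between_iff span_vertices_def span_edges_def by blast

lemma reachable_span_vertices:
  assumes "u \<in> span_vertices VT ET S"
  obtains a where "a \<in> S" "reachable (span_vertices VT ET S) (span_edges VT ET S) a u"
proof -
  obtain a b P where "a \<in> S" "b \<in> S" and P: "path_between VT ET a b P" "u \<in> set P"
    using assms unfolding span_vertices_def by blast
  then have P_span: "path_between (span_vertices VT ET S) (span_edges VT ET S) a b P"
    by (intro path_between_span)
  obtain us vs where P_split: "P = us @ u # vs" using P(2) by (meson split_list)
  have "path_edges (us @ [u]) \<subseteq> path_edges P" unfolding P_split path_edges_append[of us u vs] by blast
  moreover have "hd (us @ [u]) = a" using P_span P_split by (cases us) (auto simp: path_between_iff)
  ultimately have "reachable (span_vertices VT ET S) (span_edges VT ET S) a u"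
    using P_span P_split unfolding reachable_def path_between_iff
    by (intro exI[of _ "us @ [u]"]) auto
  with \<open>a \<in> S\<close> show ?thesis by (rule that)
qed

lemma connected_graph_span:
  assumes "connected_graph VT ET" "S \<subseteq> VT" "S \<noteq> {}"
  shows "connected_graph (span_vertices VT ET S) (span_edges VT ET S)"
  unfolding connected_graph_def
proof (intro conjI ballI)
  show "span_vertices VT ET S \<noteq> {}" using assms(2,3) subset_span_vertices by blast
next
  let ?V = "span_vertices VT ET S" and ?E = "span_edges VT ET S"
  fix u w assume "u \<in> ?V" "w \<in> ?V"
  then obtain a c where "a \<in> S" "c \<in> S" "reachable ?V ?E a u" "reachable ?V ?E c w"
    by (metis reachable_span_vertices)
  moreover obtain R where "path_between VT ET a c R"
    using assms(1,2) \<open>a \<in> S\<close> \<open>c \<in> S\<close> unfolding connected_graph_def by blast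
  ultimately have "reachable ?V ?E u w"
    by (metis path_between_span path_between_imp_reachable reachable_sym reachable_trans)
  then show "\<exists>P. path_between ?V ?E u w P" by (metis reachable_imp_path)
qed

lemma leaves_span_subset: "leaves (span_vertices VT ET S) (span_edges VT ET S) \<subseteq> S"
proof
  fix u assume leaf: "u \<in> leaves (span_vertices VT ET S) (span_edges VT ET S)"
  show "u \<in> S"
  proof (rule ccontr)
    assume "u \<notin> S"
    obtain a b P where "a \<in> S" "b \<in> S" and P: "path_between VT ET a b P" "u \<in> set P"
      using leaf unfolding leaves_def span_vertices_def by blast
    with \<open>u \<notin> S\<close> have "u \<in> internal P" by (intro in_internalI) (auto simp: path_between_iff)
    then obtain v w where "v \<noteq> w" "{v, u} \<in> path_edges P" "{u, w} \<in> path_edges P"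
      using P(1) internal_vertex_two_path_edges unfolding path_between_iff by metis
    then have "{v, u} \<in> {e \<in> span_edges VT ET S. u \<in> e}" "{u, w} \<in> {e \<in> span_edges VT ET S. u \<in> e}"
      "{v, u} \<noteq> {u, w}"
      using \<open>a \<in> S\<close> \<open>b \<in> S\<close> P(1) unfolding span_edges_def by (auto simp: doubleton_eq_iff)
    moreover have "card {e \<in> span_edges VT ET S. u \<in> e} = 1"
      using leaf unfolding leaves_def degree_def by simp
    ultimately show False by (metis card_1_singletonE singletonD)
  qed
qed

lemma is_tree_span:
  assumes "is_tree VT ET" "S \<subseteq> VT" "S \<noteq> {}"
  shows "is_tree (span_vertices VT ET S) (span_edges VT ET S)"
proof -
  have "simple_graph (span_vertices VT ET S) (span_edges VT ET S)"
    using assms(1) span_edges_subset span_edge_subset_span_vertices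
    unfolding is_tree_def simple_graph_def by (metis insert_subset subsetD)
  moreover have "\<nexists>C. is_cycle (span_vertices VT ET S) (span_edges VT ET S) C"
    using assms(1) is_cycle_mono[OF _ span_vertices_subset span_edges_subset]
    unfolding is_tree_def by blast
  ultimately show ?thesis
    using assms connected_graph_span unfolding is_tree_def by blast
qed

lemma steiner_tree_span:
  assumes "subgraph VT ET V E" "is_tree VT ET" "S \<subseteq> VT" "S \<noteq> {}"
  shows "steiner_tree V E S (span_vertices VT ET S, span_edges VT ET S)"
  using assms is_tree_span[OF assms(2-4)] leaves_span_subset subset_span_vertices
    span_vertices_subset span_edges_subset span_edge_subset_span_vertices
  unfolding steiner_tree_def subgraph_def by (metis fst_conv snd_conv order_trans)

definition paths_avoid :: "'a set \<Rightarrow> 'a set set \<Rightarrow> 'a \<Rightarrow> 'a \<Rightarrow> 'a \<Rightarrow> bool" where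
  "paths_avoid VT ET v x y \<longleftrightarrow> (\<forall>P. path_between VT ET x y P \<longrightarrow> v \<notin> set P)"

lemma paths_avoid_sym: "paths_avoid VT ET v x y \<Longrightarrow> paths_avoid VT ET v y x"
  unfolding paths_avoid_def by (metis path_between_rev rev_rev_ident set_rev)

lemma paths_avoid_trans:
  assumes tree: "is_tree VT ET" and "x \<in> VT" "y \<in> VT" "z \<in> VT"
    and "paths_avoid VT ET v x y" "paths_avoid VT ET v y z"
  shows "paths_avoid VT ET v x z"
proof -
  obtain P1 P2 where P: "path_between VT ET x y P1" "path_between VT ET y z P2"
    using assms(1-4) unfolding is_tree_def connected_graph_def by blast
  with assms(5,6) have "v \<notin> set P1 \<union> set P2" unfolding paths_avoid_def by blast
  have "reachable (set P1 \<union> set P2) ET x y" "reachable (set P1 \<union> set P2) ET y z"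
    using P unfolding reachable_def path_between_iff by blast+
  then have "reachable (set P1 \<union> set P2) ET x z" by (rule reachable_trans)
  then obtain R where R: "path_between (set P1 \<union> set P2) ET x z R" by (rule reachable_imp_path)
  then have "v \<notin> set R" using \<open>v \<notin> set P1 \<union> set P2\<close> unfolding path_between_iff by blast
  moreover have "path_between VT ET x z R"
    using P by (intro path_between_mono[OF R]) (auto simp: path_between_iff)
  ultimately show ?thesis
    using tree acyclic_path_unique unfolding is_tree_def paths_avoid_def by metis
qed

lemma union_of_equivalences_total:
  assumes total: "\<And>x y. x \<in> A \<Longrightarrow> y \<in> A \<Longrightarrow> R x y \<or> Q x y"
    and R_sym: "\<And>x y. x \<in> A \<Longrightarrow> y \<in> A \<Longrightarrow> R x y \<Longrightarrow> R y x"
    and R_trans: "\<And>x y z. x \<in> A \<Longrightarrow> y \<in> A \<Longrightarrow> z \<in> A \<Longrightarrow> R x y \<Longrightarrow> R y z \<Longrightarrow> R x z"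
    and Q_sym: "\<And>x y. x \<in> A \<Longrightarrow> y \<in> A \<Longrightarrow> Q x y \<Longrightarrow> Q y x"
    and Q_trans: "\<And>x y z. x \<in> A \<Longrightarrow> y \<in> A \<Longrightarrow> z \<in> A \<Longrightarrow> Q x y \<Longrightarrow> Q y z \<Longrightarrow> Q x z"
  shows "(\<forall>x\<in>A. \<forall>y\<in>A. R x y) \<or> (\<forall>x\<in>A. \<forall>y\<in>A. Q x y)"
proof (rule ccontr)
  assume "\<not> ?thesis"
  then obtain a b c d where abcd: "a \<in> A" "b \<in> A" "c \<in> A" "d \<in> A" "\<not> R a b" "\<not> Q c d"
    by blast
  then have "R c d" using total by blast
  \<comment> \<open>\<open>x\<close> cannot be \<open>Q\<close>-related to both \<open>c\<close> and \<open>d\<close>, so it is \<open>R\<close>-related to one of them\<close>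
  have "R x c" if "x \<in> A" for x
  proof -
    have "\<not> Q x c \<or> \<not> Q x d" using abcd that Q_sym Q_trans by metis
    then have "R x c \<or> R x d" using total abcd that by blast
    then show ?thesis using \<open>R c d\<close> abcd that R_sym R_trans by metis
  qed
  then have "R a b" using abcd R_sym R_trans by metis
  with abcd show False by blast
qed

lemma completely_independent_steiner_tree:
  "completely_independent V E S k T \<Longrightarrow> i < k \<Longrightarrow> steiner_tree V E S (T i)"
  unfolding completely_independent_def by blast

lemma completely_independent_pairwise:
  assumes "completely_independent V E S k T" "p < k" "q < k" "p \<noteq> q"
  shows "snd (T p) \<inter> snd (T q) = {}" "fst (T p) \<inter> fst (T q) = S"
    and "\<And>x y P Q. x \<in> S \<Longrightarrow> y \<in> S \<Longrightarrow> path_between (fst (T p)) (snd (T p)) x y P \<Longrightarrow>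
      path_between (fst (T q)) (snd (T q)) x y Q \<Longrightarrow> internal P \<inter> internal Q = {}"
  using assms unfolding completely_independent_def by (metis inf_commute linorder_neq_iff)+

lemma completely_independent_span_vertices_inter:
  assumes CI: "completely_independent V E S' k T" and "p < k" "q < k" "p \<noteq> q" "S \<subseteq> S'"
  shows "span_vertices (fst (T p)) (snd (T p)) S \<inter> span_vertices (fst (T q)) (snd (T q)) S \<subseteq> S"
proof
  fix v assume v: "v \<in> span_vertices (fst (T p)) (snd (T p)) S \<inter> span_vertices (fst (T q)) (snd (T q)) S"
  show "v \<in> S"
  proof (rule ccontr)
    assume "v \<notin> S"
    let ?avoid_p = "paths_avoid (fst (T p)) (snd (T p)) v"
      and ?avoid_q = "paths_avoid (fst (T q)) (snd (T q)) v"
    have trees: "is_tree (fst (T i)) (snd (T i))" "S \<subseteq> fst (T i)" if "i \<in> {p, q}" for i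
      using that assms completely_independent_steiner_tree unfolding steiner_tree_def by blast+
    \<comment> \<open>otherwise \<open>v \<notin> S\<close> is an internal vertex of an \<open>x\<close>-\<open>y\<close> path in both trees\<close>
    have "?avoid_p x y \<or> ?avoid_q x y" if "x \<in> S" "y \<in> S" for x y
    proof (rule ccontr)
      assume "\<not> ?thesis"
      then obtain P Q where PQ: "path_between (fst (T p)) (snd (T p)) x y P" "v \<in> set P"
        "path_between (fst (T q)) (snd (T q)) x y Q" "v \<in> set Q"
        unfolding paths_avoid_def by blast
      with \<open>v \<notin> S\<close> that have "v \<in> internal P" "v \<in> internal Q"
        by (auto intro!: in_internalI simp: path_between_iff)
      with completely_independent_pairwise(3)[OF assms(1-4)] PQ that \<open>S \<subseteq> S'\<close> show False
        by blast
    qed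
    then have "(\<forall>x\<in>S. \<forall>y\<in>S. ?avoid_p x y) \<or> (\<forall>x\<in>S. \<forall>y\<in>S. ?avoid_q x y)"
      using trees by (intro union_of_equivalences_total)
        (blast intro: paths_avoid_sym paths_avoid_trans)+
    with v show False unfolding span_vertices_def paths_avoid_def by blast
  qed
qed

lemma completely_independent_span:
  assumes CI: "completely_independent V E S' k T" and "S \<subseteq> S'" "S \<noteq> {}"
  shows "completely_independent V E S k
    (\<lambda>i. (span_vertices (fst (T i)) (snd (T i)) S, span_edges (fst (T i)) (snd (T i)) S))"
    (is "completely_independent V E S k ?T")
proof -
  have tree: "subgraph (fst (T i)) (snd (T i)) V E" "is_tree (fst (T i)) (snd (T i))"
    "S \<subseteq> fst (T i)" if "i < k" for i
    using completely_independent_steiner_tree[OF CI that] \<open>S \<subseteq> S'\<close>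
    unfolding steiner_tree_def by auto
  have "steiner_tree V E S (?T i)" if "i < k" for i
    using tree[OF that] \<open>S \<noteq> {}\<close> by (simp add: steiner_tree_span)
  moreover have "snd (?T p) \<inter> snd (?T q) = {}" if "p < q" "q < k" for p q
    using completely_independent_pairwise(1)[OF CI, of p q] that
      span_edges_subset[of "fst (T p)" "snd (T p)" S] span_edges_subset[of "fst (T q)" "snd (T q)" S]
    by auto
  moreover have "fst (?T p) \<inter> fst (?T q) = S" if "p < q" "q < k" for p q
  proof
    show "fst (?T p) \<inter> fst (?T q) \<subseteq> S"
      using completely_independent_span_vertices_inter[OF CI, of p q S] that \<open>S \<subseteq> S'\<close> by simp
    show "S \<subseteq> fst (?T p) \<inter> fst (?T q)"
      using tree(3)[of p] tree(3)[of q] that subset_span_vertices by (metis fst_conv le_inf_iff order_less_trans)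
  qed
  moreover have "internal P \<inter> internal Q = {}"
    if "p < q" "q < k" "x \<in> S" "y \<in> S"
      "path_between (fst (?T p)) (snd (?T p)) x y P" "path_between (fst (?T q)) (snd (?T q)) x y Q"
    for p q x y P Q
  proof -
    have "path_between (fst (T p)) (snd (T p)) x y P" "path_between (fst (T q)) (snd (T q)) x y Q"
      using path_between_mono[OF that(5)[simplified] span_vertices_subset span_edges_subset]
        path_between_mono[OF that(6)[simplified] span_vertices_subset span_edges_subset] .
    then show ?thesis
      using completely_independent_pairwise(3)[OF CI, of p q x y P Q] that \<open>S \<subseteq> S'\<close> by auto
  qed
  ultimately show ?thesis unfolding completely_independent_def by fast
qed

lemma has_cist_subset: "has_cist V E S' k \<Longrightarrow> S \<subseteq> S' \<Longrightarrow> S \<noteq> {} \<Longrightarrow> has_cist V E S k"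
  unfolding has_cist_def by (blast intro: completely_independent_span)

lemma has_cist_0: "has_cist V E S 0"
  unfolding has_cist_def completely_independent_def by simp

lemma has_cist_le_card_edges:
  assumes "has_cist V E S k" "finite E" "x \<in> S" "y \<in> S" "x \<noteq> y"
  shows "k \<le> card E"
proof -
  obtain T where CI: "completely_independent V E S k T" using assms(1) unfolding has_cist_def ..
  \<comment> \<open>the \<open>x\<close>-\<open>y\<close> path gives every tree an edge, and the trees are edge-disjoint\<close>
  have edge: "\<exists>e. e \<in> snd (T i)" if "i < k" for i
  proof -
    have "is_tree (fst (T i)) (snd (T i))" "S \<subseteq> fst (T i)"
      using completely_independent_steiner_tree[OF CI that] unfolding steiner_tree_def by auto
    then obtain P where P: "path_between (fst (T i)) (snd (T i)) x y P"
      using assms(3,4) unfolding is_tree_def connected_graph_def by blast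
    then have "path_edges P \<noteq> {}" using \<open>x \<noteq> y\<close> by (rule path_edges_nonempty)
    moreover have "path_edges P \<subseteq> snd (T i)" using P by (simp add: path_between_iff)
    ultimately show ?thesis by blast
  qed
  define f where "f i = (SOME e. e \<in> snd (T i))" for i
  have f: "f i \<in> snd (T i)" if "i < k" for i
    unfolding f_def using edge[OF that] by (rule someI_ex)
  have "inj_on f {..<k}"
  proof (rule inj_onI, rule ccontr)
    fix i j assume "i \<in> {..<k}" "j \<in> {..<k}" "f i = f j" "i \<noteq> j"
    then show False
      using f[of i] f[of j] completely_independent_pairwise(1)[OF CI, of i j] by auto
  qed
  moreover have "f ` {..<k} \<subseteq> E"
    using f completely_independent_steiner_tree[OF CI] unfolding steiner_tree_def subgraph_def by blast
  ultimately show ?thesis using card_inj_on_le[OF _ _ \<open>finite E\<close>] by fastforce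
qed

lemma kappa_star_mono:
  assumes "finite E" "x \<in> S" "y \<in> S" "x \<noteq> y" "S \<subseteq> S'"
  shows "kappa_star V E S' \<le> kappa_star V E S"
proof -
  have finite: "finite {j. has_cist V E X j}" if "x \<in> X" "y \<in> X" for X
  proof -
    have "{j. has_cist V E X j} \<subseteq> {..card E}"
      using has_cist_le_card_edges[OF _ \<open>finite E\<close> that \<open>x \<noteq> y\<close>] by blast
    then show ?thesis by (rule finite_subset) simp
  qed
  have "{j. has_cist V E S' j} \<noteq> {}" using has_cist_0 by blast
  with finite[of S'] assms(2,3,5) have "kappa_star V E S' \<in> {j. has_cist V E S' j}"
    unfolding kappa_star_def by (intro Max_in) auto
  then have "has_cist V E S (kappa_star V E S')"
    using assms(2,5) by (blast intro: has_cist_subset)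
  then show ?thesis
    unfolding kappa_star_def[of V E S] using finite[of S] assms(2,3) by (intro Max_ge) auto
qed

lemma finite_simple_graph_finite_edges:
  assumes "finite_simple_graph V E"
  shows "finite E"
proof (rule finite_subset)
  show "E \<subseteq> Pow V" using assms unfolding finite_simple_graph_def simple_graph_def by fastforce
  show "finite (Pow V)" using assms unfolding finite_simple_graph_def by simp
qed

theorem theorem2p2:
  fixes V :: "'a set" and E :: "'a set set" and S S' :: "'a set" and k :: nat
  assumes "finite_simple_graph V E"
    and "connected_graph V E"
    and "S' \<subseteq> V"
    and "2 \<le> card S"
    and "S \<subset> S'"
    and "has_cist V E S' k"
  shows "has_cist V E S k \<and> kappa_star V E S \<ge> kappa_star V E S'"
proof -
  have "finite S" using \<open>2 \<le> card S\<close> card.infinite by force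
  moreover have "\<not> card S \<le> Suc 0" using \<open>2 \<le> card S\<close> by simp
  ultimately obtain x y where xy: "x \<in> S" "y \<in> S" "x \<noteq> y" using card_le_Suc0_iff_eq by blast
  have "finite E" using assms(1) by (rule finite_simple_graph_finite_edges)
  have "S \<subseteq> S'" "S \<noteq> {}" using \<open>S \<subset> S'\<close> \<open>x \<in> S\<close> by auto
  show ?thesis
    using has_cist_subset[OF assms(6) \<open>S \<subseteq> S'\<close> \<open>S \<noteq> {}\<close>] kappa_star_mono[OF \<open>finite E\<close> xy \<open>S \<subseteq> S'\<close>]
    by simp
qed

end
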